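(* Let $k$ be a field, $x$ an indeterminate, and $R=k[x, x^{2/3^n} : n\ge 1]$, i.e. the monoid algebra over $k$ of the additive monoid $M\subseteq\mathbb{Q}_{\ge0}$ generated by $1$ and $2/3^n$ for all $n\ge1$. Then $1$ is the unique atom of $M$ (every $2/3^n$ is a sum of other nonzero elements of $M$); consequently $x$ is irreducible in $R$, while $x^{2/3}$ is not a product of irreducible elements of $R$. In particular, since $x\cdot x = (x^{2/3})^3$, the set of non-atomic nonzero nonunits of $R$ is not multiplicatively closed.
   Context: An atom of a commutative monoid $M$ (written additively, with no nonzero units) is a nonzero element not expressible as a sum of two nonzero elements. An element of an integral domain is atomic if it is a finite product of irreducible elements. *)

theory Defs
  imports Complex_Main "HOL-Library.Poly_Mapping"
begin

definition gens :: "rat set" where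
  "gens = {1} \<union> {2 / 3 ^ n | n. n \<ge> (1::nat)}"

inductive_set M :: "rat set" where
  zero: "0 \<in> M"
| gen: "g \<in> gens \<Longrightarrow> g \<in> M"
| add: "a \<in> M \<Longrightarrow> b \<in> M \<Longrightarrow> a + b \<in> M"

definition atom_of :: "'a::monoid_add set \<Rightarrow> 'a \<Rightarrow> bool" where
  "atom_of S a \<longleftrightarrow> a \<in> S \<and> a \<noteq> 0 \<and>
     \<not> (\<exists>b\<in>S. \<exists>c\<in>S. b \<noteq> 0 \<and> c \<noteq> 0 \<and> a = b + c)"

text \<open>The monoid algebra R = k[M], realised inside the ring of finitely supported
  functions from rat to k (the monoid algebra of (rat,+)) as those with support in M.\<close>
definition R :: "(rat \<Rightarrow>\<^sub>0 'k::field) set" where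
  "R = {f. Poly_Mapping.keys f \<subseteq> M}"

definition xpow :: "rat \<Rightarrow> (rat \<Rightarrow>\<^sub>0 'k::field)" where
  "xpow q = Poly_Mapping.single q 1"

definition unit_in :: "'a::comm_ring_1 set \<Rightarrow> 'a \<Rightarrow> bool" where
  "unit_in A u \<longleftrightarrow> u \<in> A \<and> (\<exists>v\<in>A. u * v = 1)"

definition irreducible_in :: "'a::comm_ring_1 set \<Rightarrow> 'a \<Rightarrow> bool" where
  "irreducible_in A p \<longleftrightarrow> p \<in> A \<and> p \<noteq> 0 \<and> \<not> unit_in A p \<and>
     (\<forall>a\<in>A. \<forall>b\<in>A. p = a * b \<longrightarrow> unit_in A a \<or> unit_in A b)"

definition atomic_in :: "'a::comm_ring_1 set \<Rightarrow> 'a \<Rightarrow> bool" where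
  "atomic_in A a \<longleftrightarrow> (\<exists>xs. xs \<noteq> [] \<and> (\<forall>p\<in>set xs. irreducible_in A p) \<and> a = prod_list xs)"

end

theory Submission
  imports Defs
begin

text \<open>Every element of \<open>M\<close> has the form \<open>n + 2m/3\<^sup>N\<close>. If two nonzero elements add up to \<open>1\<close>,
  both have integer part \<open>0\<close>, and their sum \<open>2m/3\<^sup>N\<close> cannot be \<open>1\<close> because \<open>3\<^sup>N\<close> is odd; so
  \<open>1\<close> is an atom. Any other nonzero element splits off \<open>1\<close>, or is \<open>2m/3\<^sup>N = 2m/3\<^sup>N\<^sup>+\<^sup>1 + 4m/3\<^sup>N\<^sup>+\<^sup>1\<close>.

  In \<open>R = k[M]\<close> the largest and the smallest exponent are both additive under multiplication,
  because \<open>M\<close> is totally ordered and cancellative. Hence every factor of a monomial is a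
  monomial, the irreducible monomials are the \<open>c x\<close>, and a product of irreducibles that equals
  \<open>x\<^sup>q\<close> forces \<open>q\<close> to be a natural number. Thus \<open>x\<^sup>2\<^sup>/\<^sup>3\<close> and \<open>x\<^sup>4\<^sup>/\<^sup>3\<close> are not atomic,
  although their product \<open>x \<cdot> x\<close> is.\<close>

definition triadic :: "nat \<Rightarrow> nat \<Rightarrow> rat" where
  "triadic m N = 2 * of_nat m / 3 ^ N"

lemma triadic_add: "triadic m N + triadic m' N' = triadic (m * 3 ^ N' + m' * 3 ^ N) (N + N')"
  by (simp add: triadic_def field_simps power_add)

lemma triadic_nonneg: "triadic m N \<ge> 0"
  by (simp add: triadic_def)

lemma triadic_ne_1: "triadic m N \<noteq> 1"
proof
  assume "triadic m N = 1"
  then have "of_nat (2 * m) = (of_nat (3 ^ N) :: rat)"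
    by (simp add: triadic_def field_simps)
  then have "2 * m = 3 ^ N"
    using of_nat_eq_iff by blast
  moreover have "odd ((3::nat) ^ N)"
    by simp
  ultimately show False
    by (metis dvd_triv_left)
qed

lemma one_in_M: "1 \<in> M"
  by (rule M.gen) (simp add: gens_def)

lemma of_nat_in_M: "of_nat n \<in> M"
  by (induction n) (simp_all add: M.zero M.add one_in_M add.commute)

lemma triadic_in_M: "triadic m N \<in> M"
proof (cases N)
  case 0
  then show ?thesis
    using of_nat_in_M[of "2 * m"] by (simp add: triadic_def)
next
  case (Suc K)
  then have "2 / 3 ^ N \<in> M"
    by (intro M.gen) (auto simp: gens_def intro!: exI[of _ N])
  moreover have "triadic (Suc m) N = triadic m N + 2 / 3 ^ N" for m
    by (simp add: triadic_def field_simps)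
  ultimately show ?thesis
    by (induction m) (simp_all add: triadic_def M.zero M.add)
qed

lemma M_iff: "q \<in> M \<longleftrightarrow> (\<exists>n m N. q = of_nat n + triadic m N)"
proof
  assume "q \<in> M"
  then show "\<exists>n m N. q = of_nat n + triadic m N"
  proof (induction rule: M.induct)
    case zero
    show ?case by (intro exI[of _ 0]) (simp add: triadic_def)
  next
    case (gen g)
    then consider "g = 1" | N where "g = triadic 1 N"
      by (auto simp: gens_def triadic_def)
    then show ?case
    proof cases
      case 1
      then show ?thesis by (intro exI[of _ 1] exI[of _ 0]) (simp add: triadic_def)
    qed (metis add_0 of_nat_0)
  next
    case (add a b)
    then obtain n m N n' m' N' where "a = of_nat n + triadic m N" "b = of_nat n' + triadic m' N'"
      by blast
    then have "a + b = of_nat (n + n') + triadic (m * 3 ^ N' + m' * 3 ^ N) (N + N')"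
      by (simp flip: triadic_add)
    then show ?case by blast
  qed
qed (auto intro: M.add of_nat_in_M triadic_in_M)

lemma M_nonneg: "q \<in> M \<Longrightarrow> q \<ge> 0"
  using triadic_nonneg by (fastforce simp: M_iff)

lemma atom_of_M_1: "atom_of M 1"
proof -
  have "b + c \<noteq> 1" if "b \<in> M" "c \<in> M" "b \<noteq> 0" "c \<noteq> 0" for b c
  proof
    assume sum: "b + c = 1"
    obtain n m N n' m' N' where b: "b = of_nat n + triadic m N" and c: "c = of_nat n' + triadic m' N'"
      using \<open>b \<in> M\<close> \<open>c \<in> M\<close> by (auto simp: M_iff)
    have "b < 1" "c < 1"
      using sum \<open>b \<noteq> 0\<close> \<open>c \<noteq> 0\<close> M_nonneg[OF \<open>b \<in> M\<close>] M_nonneg[OF \<open>c \<in> M\<close>] by auto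
    then have "n = 0" "n' = 0"
      using b c triadic_nonneg[of m N] triadic_nonneg[of m' N'] by (auto simp: not_less_zero)
    then show False
      using sum b c triadic_ne_1 by (simp add: triadic_add)
  qed
  then show ?thesis
    by (auto simp: atom_of_def one_in_M)
qed

lemma atom_of_M_iff: "atom_of M q \<longleftrightarrow> q = 1"
proof
  assume atom: "atom_of M q"
  then obtain n m N where q: "q = of_nat n + triadic m N"
    by (auto simp: atom_of_def M_iff)
  show "q = 1"
  proof (cases n)
    case 0
    then have "q = triadic m (N + 1) + triadic (2 * m) (N + 1)"
      by (simp add: q triadic_def field_simps)
    moreover have "m \<noteq> 0"
      using atom 0 q by (auto simp: atom_of_def triadic_def)
    then have "triadic m (N + 1) \<noteq> 0" "triadic (2 * m) (N + 1) \<noteq> 0"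
      by (simp_all add: triadic_def)
    ultimately show ?thesis
      using atom triadic_in_M unfolding atom_of_def by blast
  next
    case (Suc n')
    then have "q = 1 + (of_nat n' + triadic m N)"
      by (simp add: q)
    moreover have "of_nat n' + triadic m N \<in> M"
      by (auto simp: M_iff)
    ultimately show ?thesis
      using atom one_in_M by (auto simp: atom_of_def)
  qed
qed (simp add: atom_of_M_1)

lemma lookup_mult_unique_decomposition:
  fixes f g :: "'a::monoid_add \<Rightarrow>\<^sub>0 'b::semiring_0"
  assumes unique: "\<And>x y. x \<in> Poly_Mapping.keys f \<Longrightarrow> y \<in> Poly_Mapping.keys g \<Longrightarrow> x + y = a + b \<Longrightarrow> x = a \<and> y = b"
  shows "Poly_Mapping.lookup (f * g) (a + b) = Poly_Mapping.lookup f a * Poly_Mapping.lookup g b"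
proof -
  have "Poly_Mapping.lookup f l * (\<Sum>q. Poly_Mapping.lookup g q when a + b = l + q)
      = (Poly_Mapping.lookup f l * Poly_Mapping.lookup g b when l = a)" for l
  proof (cases "l \<in> Poly_Mapping.keys f")
    case True
    have "(Poly_Mapping.lookup g q when a + b = l + q) = (Poly_Mapping.lookup g q when q = b when l = a)" for q
      using unique[OF True, of q] by (cases "q \<in> Poly_Mapping.keys g") (auto simp: in_keys_iff when_def)
    then show ?thesis
      by (simp add: when_def)
  qed (auto simp: in_keys_iff when_def)
  then show ?thesis
    by (simp add: lookup_mult)
qed

text \<open>\<open>max_key\<close> and \<open>min_key\<close> are unspecified on \<open>0\<close> (\<open>Max {}\<close>, \<open>Min {}\<close>).\<close>

definition max_key :: "('a::linorder \<Rightarrow>\<^sub>0 'b::zero) \<Rightarrow> 'a" where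
  "max_key f = Max (Poly_Mapping.keys f)"

definition min_key :: "('a::linorder \<Rightarrow>\<^sub>0 'b::zero) \<Rightarrow> 'a" where
  "min_key f = Min (Poly_Mapping.keys f)"

lemma max_key_in_keys: "f \<noteq> 0 \<Longrightarrow> max_key f \<in> Poly_Mapping.keys f"
  by (simp add: max_key_def)

lemma min_key_in_keys: "f \<noteq> 0 \<Longrightarrow> min_key f \<in> Poly_Mapping.keys f"
  by (simp add: min_key_def)

lemma le_max_key: "k \<in> Poly_Mapping.keys f \<Longrightarrow> k \<le> max_key f"
  by (simp add: max_key_def)

lemma min_key_le: "k \<in> Poly_Mapping.keys f \<Longrightarrow> min_key f \<le> k"
  by (simp add: min_key_def)

lemma min_key_le_max_key: "f \<noteq> 0 \<Longrightarrow> min_key f \<le> max_key f"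
  using le_max_key min_key_in_keys by blast

lemma max_key_single [simp]: "c \<noteq> 0 \<Longrightarrow> max_key (Poly_Mapping.single k c) = k"
  by (simp add: max_key_def)

lemma min_key_single [simp]: "c \<noteq> 0 \<Longrightarrow> min_key (Poly_Mapping.single k c) = k"
  by (simp add: min_key_def)

lemma eq_single_max_key:
  assumes "min_key f = max_key f"
  shows "f = Poly_Mapping.single (max_key f) (Poly_Mapping.lookup f (max_key f))"
proof (rule poly_mapping_eqI)
  fix k
  have "Poly_Mapping.lookup f k = 0" if "k \<noteq> max_key f"
    using that assms le_max_key min_key_le by (metis antisym in_keys_iff)
  then show "Poly_Mapping.lookup f k = Poly_Mapping.lookup (Poly_Mapping.single (max_key f) (Poly_Mapping.lookup f (max_key f))) k"
    by (cases "k = max_key f") (simp_all add: lookup_single)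
qed

lemma add_eq_add_le_imp_eq:
  fixes x y a b :: "'a::{ordered_cancel_comm_monoid_add, linorder}"
  assumes "x \<le> a" "y \<le> b" "x + y = a + b"
  shows "x = a \<and> y = b"
proof (rule ccontr)
  assume "\<not> (x = a \<and> y = b)"
  then have "x < a \<or> y < b"
    using assms by auto
  then have "x + y < a + b"
    using assms add_less_le_mono[of x a y b] add_le_less_mono[of x a y b] by auto
  then show False
    using assms by simp
qed

context
  fixes f g :: "'a::{ordered_cancel_comm_monoid_add, linorder} \<Rightarrow>\<^sub>0 'b::semiring_no_zero_divisors"
  assumes nonzero: "f \<noteq> 0" "g \<noteq> 0"
begin

lemma max_key_mult: "max_key (f * g) = max_key f + max_key g"
proof -
  have "Poly_Mapping.lookup (f * g) (max_key f + max_key g)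
      = Poly_Mapping.lookup f (max_key f) * Poly_Mapping.lookup g (max_key g)"
    by (rule lookup_mult_unique_decomposition) (meson add_eq_add_le_imp_eq le_max_key)
  then have "max_key f + max_key g \<in> Poly_Mapping.keys (f * g)"
    using nonzero max_key_in_keys[of f] max_key_in_keys[of g] by (simp add: in_keys_iff)
  moreover have "k \<le> max_key f + max_key g" if "k \<in> Poly_Mapping.keys (f * g)" for k
    using keys_mult[of f g] that by (auto intro: add_mono le_max_key)
  ultimately show ?thesis
    unfolding max_key_def[of "f * g"] by (simp add: Max_eqI)
qed

lemma min_key_mult: "min_key (f * g) = min_key f + min_key g"
proof -
  have "Poly_Mapping.lookup (f * g) (min_key f + min_key g)
      = Poly_Mapping.lookup f (min_key f) * Poly_Mapping.lookup g (min_key g)"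
    by (rule lookup_mult_unique_decomposition) (metis add_eq_add_le_imp_eq min_key_le)
  then have "min_key f + min_key g \<in> Poly_Mapping.keys (f * g)"
    using nonzero min_key_in_keys[of f] min_key_in_keys[of g] by (simp add: in_keys_iff)
  moreover have "min_key f + min_key g \<le> k" if "k \<in> Poly_Mapping.keys (f * g)" for k
    using keys_mult[of f g] that by (auto intro: add_mono min_key_le)
  ultimately show ?thesis
    unfolding min_key_def[of "f * g"] by (simp add: Min_eqI)
qed

end

lemma max_key_prod_list:
  fixes ps :: "('a::{ordered_cancel_comm_monoid_add, linorder} \<Rightarrow>\<^sub>0 'b::semiring_1_no_zero_divisors) list"
  assumes "0 \<notin> set ps"
  shows "max_key (prod_list ps) = sum_list (map max_key ps)"
  using assms by (induction ps) (simp_all add: max_key_mult prod_list_zero_iff flip: single_one)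

lemma min_key_prod_list:
  fixes ps :: "('a::{ordered_cancel_comm_monoid_add, linorder} \<Rightarrow>\<^sub>0 'b::semiring_1_no_zero_divisors) list"
  assumes "0 \<notin> set ps"
  shows "min_key (prod_list ps) = sum_list (map min_key ps)"
  using assms by (induction ps) (simp_all add: min_key_mult prod_list_zero_iff flip: single_one)

lemma keys_nonneg_if_in_R: "(f :: rat \<Rightarrow>\<^sub>0 'k::field) \<in> R \<Longrightarrow> k \<in> Poly_Mapping.keys f \<Longrightarrow> k \<ge> 0"
  using M_nonneg by (auto simp: R_def)

lemma single_in_R: "q \<in> M \<Longrightarrow> Poly_Mapping.single q (c::'k::field) \<in> R"
  by (simp add: R_def)

lemma max_key_eq_0_if_unit_in_R:
  fixes u :: "rat \<Rightarrow>\<^sub>0 'k::field"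
  assumes "unit_in R u"
  shows "u \<noteq> 0" "max_key u = 0"
proof -
  obtain v where v: "u \<in> R" "v \<in> R" "u * v = 1"
    using assms by (auto simp: unit_in_def)
  then show "u \<noteq> 0"
    by auto
  have "v \<noteq> 0"
    using v by auto
  have "max_key u + max_key v = max_key (1 :: rat \<Rightarrow>\<^sub>0 'k)"
    using \<open>u \<noteq> 0\<close> \<open>v \<noteq> 0\<close> v(3) by (metis max_key_mult)
  also have "\<dots> = 0"
    by (simp flip: single_one)
  finally show "max_key u = 0"
    using keys_nonneg_if_in_R[OF v(1) max_key_in_keys[OF \<open>u \<noteq> 0\<close>]]
      keys_nonneg_if_in_R[OF v(2) max_key_in_keys[OF \<open>v \<noteq> 0\<close>]] by linarith
qed

lemma unit_in_R_single_0: "c \<noteq> 0 \<Longrightarrow> unit_in R (Poly_Mapping.single 0 c :: rat \<Rightarrow>\<^sub>0 'k::field)"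
  unfolding unit_in_def
  by (intro conjI bexI[of _ "Poly_Mapping.single 0 (inverse c)"] single_in_R M.zero)
     (simp_all add: mult_single)

lemma irreducible_in_R_single_key:
  fixes p :: "rat \<Rightarrow>\<^sub>0 'k::field"
  assumes irr: "irreducible_in R p" and single_key: "min_key p = max_key p"
  shows "max_key p = 1"
proof -
  define c where "c = Poly_Mapping.lookup p (max_key p)"
  have p: "p \<in> R" "p \<noteq> 0" "p = Poly_Mapping.single (max_key p) c"
    using irr eq_single_max_key[OF single_key] by (auto simp: irreducible_in_def c_def)
  then have "c \<noteq> 0" "max_key p \<in> M"
    using max_key_in_keys[of p] by (auto simp: c_def in_keys_iff R_def)
  show ?thesis
  proof (rule ccontr)
    assume "max_key p \<noteq> 1"
    moreover have "max_key p \<noteq> 0"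
      using irr p unit_in_R_single_0[OF \<open>c \<noteq> 0\<close>] by (auto simp: irreducible_in_def)
    ultimately have "\<not> atom_of M (max_key p)"
      by (simp add: atom_of_M_iff)
    then obtain a b where ab: "a \<in> M" "b \<in> M" "a \<noteq> 0" "b \<noteq> 0" "max_key p = a + b"
      using \<open>max_key p \<in> M\<close> \<open>max_key p \<noteq> 0\<close> by (auto simp: atom_of_def)
    then have "p = Poly_Mapping.single a c * Poly_Mapping.single b 1"
      using p by (simp add: mult_single)
    moreover have "\<not> unit_in R (Poly_Mapping.single a c)" "\<not> unit_in R (Poly_Mapping.single b (1::'k))"
      using max_key_eq_0_if_unit_in_R(2) \<open>c \<noteq> 0\<close> ab by fastforce+
    ultimately show False
      using irr ab single_in_R unfolding irreducible_in_def by blast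
  qed
qed

lemma xpow_nonzero [simp]: "xpow q \<noteq> (0 :: rat \<Rightarrow>\<^sub>0 'k::field)"
  by (simp add: xpow_def flip: keys_eq_empty)

lemma max_key_xpow [simp]: "max_key (xpow q :: rat \<Rightarrow>\<^sub>0 'k::field) = q"
  by (simp add: xpow_def)

lemma min_key_xpow [simp]: "min_key (xpow q :: rat \<Rightarrow>\<^sub>0 'k::field) = q"
  by (simp add: xpow_def)

lemma xpow_add: "xpow (a + b) = (xpow a * xpow b :: rat \<Rightarrow>\<^sub>0 'k::field)"
  by (simp add: xpow_def mult_single)

lemma xpow_in_R: "q \<in> M \<Longrightarrow> xpow q \<in> R"
  by (simp add: xpow_def single_in_R)

lemma xpow_not_unit_in_R: "q \<noteq> 0 \<Longrightarrow> \<not> unit_in R (xpow q :: rat \<Rightarrow>\<^sub>0 'k::field)"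
  using max_key_eq_0_if_unit_in_R(2) by fastforce

lemma not_atomic_in_R_xpow:
  assumes "q \<notin> \<nat>"
  shows "\<not> atomic_in (R :: (rat \<Rightarrow>\<^sub>0 'k::field) set) (xpow q)"
proof
  assume "atomic_in (R :: (rat \<Rightarrow>\<^sub>0 'k::field) set) (xpow q)"
  then obtain ps :: "(rat \<Rightarrow>\<^sub>0 'k) list"
    where irr: "\<forall>p\<in>set ps. irreducible_in R p" and q: "xpow q = prod_list ps"
    by (auto simp: atomic_in_def)
  have "0 \<notin> set ps"
    using irr by (auto simp: irreducible_in_def)
  then have "sum_list (map (\<lambda>p. max_key p - min_key p) ps) = max_key (prod_list ps) - min_key (prod_list ps)"
    by (simp add: max_key_prod_list min_key_prod_list sum_list_subtractf)
  also have "\<dots> = 0"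
    by (simp flip: q)
  finally have "sum_list (map (\<lambda>p. max_key p - min_key p) ps) = 0" .
  moreover have "\<forall>p\<in>set ps. 0 \<le> max_key p - min_key p"
    using \<open>0 \<notin> set ps\<close> by (metis diff_ge_0_iff_ge min_key_le_max_key)
  ultimately have "\<forall>p\<in>set ps. min_key p = max_key p"
    using sum_list_nonneg_eq_0_iff[of "map (\<lambda>p. max_key p - min_key p) ps"] by force
  then have "\<forall>p\<in>set ps. max_key p = 1"
    using irr irreducible_in_R_single_key by blast
  then have "map max_key ps = map (\<lambda>_. 1) ps"
    by simp
  then have "q = of_nat (length ps)"
    using \<open>0 \<notin> set ps\<close> q max_key_prod_list[of ps] by (metis max_key_xpow sum_list_triv mult_1_right)
  then show False
    using assms by simp
qed

lemma irreducible_in_R_xpow_1: "irreducible_in (R :: (rat \<Rightarrow>\<^sub>0 'k::field) set) (xpow 1)"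
  unfolding irreducible_in_def
proof (intro conjI ballI impI)
  show "xpow 1 \<in> (R :: (rat \<Rightarrow>\<^sub>0 'k) set)"
    by (rule xpow_in_R[OF one_in_M])
  show "\<not> unit_in R (xpow 1 :: rat \<Rightarrow>\<^sub>0 'k)"
    by (rule xpow_not_unit_in_R) simp
next
  fix a b :: "rat \<Rightarrow>\<^sub>0 'k"
  assume ab: "a \<in> R" "b \<in> R" "xpow 1 = a * b"
  then have "a \<noteq> 0" "b \<noteq> 0"
    by (metis mult_zero_left mult_zero_right xpow_nonzero)+
  then have "max_key a + max_key b = 1" "min_key a + min_key b = 1"
    using ab(3) by (metis max_key_mult max_key_xpow, metis min_key_mult min_key_xpow)
  moreover have "min_key a \<le> max_key a" "min_key b \<le> max_key b"
    using \<open>a \<noteq> 0\<close> \<open>b \<noteq> 0\<close> by (simp_all add: min_key_le_max_key)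
  ultimately have "min_key a = max_key a" "min_key b = max_key b"
    by linarith+
  then have "a = Poly_Mapping.single (max_key a) (Poly_Mapping.lookup a (max_key a))"
    and "b = Poly_Mapping.single (max_key b) (Poly_Mapping.lookup b (max_key b))"
    by (simp_all flip: eq_single_max_key)
  moreover have "Poly_Mapping.lookup a (max_key a) \<noteq> 0" "Poly_Mapping.lookup b (max_key b) \<noteq> 0"
    using \<open>a \<noteq> 0\<close> \<open>b \<noteq> 0\<close> by (simp_all add: max_key_in_keys flip: in_keys_iff)
  moreover have "max_key a \<in> M" "max_key b \<in> M"
    using ab max_key_in_keys \<open>a \<noteq> 0\<close> \<open>b \<noteq> 0\<close> by (auto simp: R_def)
  then have "max_key a = 0 \<or> max_key b = 0"
    using atom_of_M_1 \<open>max_key a + max_key b = 1\<close> by (auto simp: atom_of_def)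
  ultimately show "unit_in R a \<or> unit_in R b"
    using unit_in_R_single_0 by metis
qed simp

lemma of_nat_div_3_notin_Nats: "\<not> 3 dvd k \<Longrightarrow> (of_nat k / 3 :: rat) \<notin> \<nat>"
proof
  assume "of_nat k / 3 \<in> (\<nat> :: rat set)"
  then obtain n where "(of_nat k / 3 :: rat) = of_nat n"
    by (auto elim: Nats_cases)
  then have "k = 3 * n"
    by (simp add: field_simps flip: of_nat_mult of_nat_eq_iff)
  moreover assume "\<not> 3 dvd k"
  ultimately show False
    by simp
qed

theorem mainTheorem4:
  shows "{a. atom_of M a} = {1}
    \<and> irreducible_in (R :: (rat \<Rightarrow>\<^sub>0 'k::field) set) (xpow 1)
    \<and> \<not> atomic_in (R :: (rat \<Rightarrow>\<^sub>0 'k::field) set) (xpow (2/3))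
    \<and> (xpow 1 * xpow 1 :: rat \<Rightarrow>\<^sub>0 'k::field) = xpow (2/3) ^ 3
    \<and> \<not> (\<forall>a\<in>{f \<in> (R :: (rat \<Rightarrow>\<^sub>0 'k::field) set). f \<noteq> 0 \<and> \<not> unit_in R f \<and> \<not> atomic_in R f}.
           \<forall>b\<in>{f \<in> (R :: (rat \<Rightarrow>\<^sub>0 'k::field) set). f \<noteq> 0 \<and> \<not> unit_in R f \<and> \<not> atomic_in R f}.
             a * b \<in> {f \<in> R. f \<noteq> 0 \<and> \<not> unit_in R f \<and> \<not> atomic_in R f})"
proof -
  define S where "S = {f \<in> (R :: (rat \<Rightarrow>\<^sub>0 'k::field) set). f \<noteq> 0 \<and> \<not> unit_in R f \<and> \<not> atomic_in R f}"
  have xpow_in_S: "xpow q \<in> S" if "q \<in> M" "q \<noteq> 0" "q \<notin> \<nat>" for q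
    using that by (simp add: S_def xpow_in_R xpow_not_unit_in_R not_atomic_in_R_xpow)
  have "2/3 \<in> M"
    by (rule M.gen) (auto simp: gens_def intro: exI[of _ 1])
  moreover have "(2/3 :: rat) \<notin> \<nat>" "(4/3 :: rat) \<notin> \<nat>"
    using of_nat_div_3_notin_Nats[of 2] of_nat_div_3_notin_Nats[of 4] by simp_all
  ultimately have "xpow (2/3) \<in> S" "xpow (4/3) \<in> S"
    using xpow_in_S M.add[of "2/3" "2/3"] by simp_all
  moreover have "atomic_in R (xpow (2/3) * xpow (4/3) :: rat \<Rightarrow>\<^sub>0 'k)"
    unfolding atomic_in_def
    by (intro exI[of _ "[xpow 1, xpow 1]"]) (simp add: irreducible_in_R_xpow_1 flip: xpow_add)
  then have "xpow (2/3) * xpow (4/3) \<notin> S"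
    by (simp add: S_def)
  moreover have "(xpow 1 * xpow 1 :: rat \<Rightarrow>\<^sub>0 'k) = xpow (2/3) ^ 3"
    by (simp add: power3_eq_cube flip: xpow_add)
  ultimately show ?thesis
    using atom_of_M_iff irreducible_in_R_xpow_1 not_atomic_in_R_xpow \<open>(2/3 :: rat) \<notin> \<nat>\<close>
    unfolding S_def by blast
qed

end
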